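(* Let $L$ be a finite nonassociative C-loop of order $n$ whose nucleus $N$ has order $m$. Then (i) $n/m\equiv 2 \pmod 6$ or $n/m\equiv 4\pmod 6$; (ii) $n$ is even; (iii) if $n=p^k$ for a prime $p$ and positive integer $k$, then $p=2$ and $k>3$. Moreover, for every integer $k>3$ there exists a nonassociative C-loop of order $2^k$ that is not a Steiner loop.
   Context: A C-loop is a loop satisfying $x(y(yz))=((xy)y)z$ for all $x,y,z$. The nucleus of a loop is the set of elements $a$ with $a(yz)=(ay)z$, $y(az)=(ya)z$, $y(za)=(yz)a$ for all $y,z$. A Steiner loop is a loop with neutral element $e$ satisfying $xx=e$, $(yx)x=y$, $xy=yx$ for all $x,y$. *)

theory Defs
  imports "HOL-Computational_Algebra.Primes"
begin

definition loop :: "'a set \<Rightarrow> ('a \<Rightarrow> 'a \<Rightarrow> 'a) \<Rightarrow> bool" where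
  "loop L f \<longleftrightarrow>
     (\<forall>x\<in>L. \<forall>y\<in>L. f x y \<in> L) \<and>
     (\<exists>e\<in>L. \<forall>x\<in>L. f e x = x \<and> f x e = x) \<and>
     (\<forall>a\<in>L. \<forall>b\<in>L. \<exists>!x. x \<in> L \<and> f a x = b) \<and>
     (\<forall>a\<in>L. \<forall>b\<in>L. \<exists>!y. y \<in> L \<and> f y a = b)"

definition c_loop :: "'a set \<Rightarrow> ('a \<Rightarrow> 'a \<Rightarrow> 'a) \<Rightarrow> bool" where
  "c_loop L f \<longleftrightarrow> loop L f \<and>
     (\<forall>x\<in>L. \<forall>y\<in>L. \<forall>z\<in>L. f x (f y (f y z)) = f (f (f x y) y) z)"

definition nucleus :: "'a set \<Rightarrow> ('a \<Rightarrow> 'a \<Rightarrow> 'a) \<Rightarrow> 'a set" where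
  "nucleus L f = {a \<in> L. \<forall>y\<in>L. \<forall>z\<in>L.
      f a (f y z) = f (f a y) z \<and> f y (f a z) = f (f y a) z \<and> f y (f z a) = f (f y z) a}"

definition nonassociative :: "'a set \<Rightarrow> ('a \<Rightarrow> 'a \<Rightarrow> 'a) \<Rightarrow> bool" where
  "nonassociative L f \<longleftrightarrow> (\<exists>x\<in>L. \<exists>y\<in>L. \<exists>z\<in>L. f x (f y z) \<noteq> f (f x y) z)"

definition steiner_loop :: "'a set \<Rightarrow> ('a \<Rightarrow> 'a \<Rightarrow> 'a) \<Rightarrow> bool" where
  "steiner_loop L f \<longleftrightarrow> loop L f \<and>
     (\<exists>e\<in>L. (\<forall>x\<in>L. f e x = x \<and> f x e = x) \<and>
        (\<forall>x\<in>L. \<forall>y\<in>L. f x x = e \<and> f (f y x) x = y \<and> f x y = f y x))"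

end

theory Submission
  imports Defs "HOL-Combinatorics.Cycles"
begin

(*
  The nucleus N of a C-loop L is a normal subloop containing every square, so the
  cosets xN form a commutative loop of exponent 2 satisfying (yx)x = y: a Steiner loop.
  In a finite Steiner loop of order q > 1, left multiplication by a non-unit a is a
  fixed-point-free involution of the elements other than e and a, and the map
  (x, y) |-> (y, xy) is a fixed-point-free permutation of order 3 of the ordered pairs
  of distinct non-units.  Hence 2 divides q - 2 and 3 divides (q - 1)(q - 2), that is
  q mod 6 is 2 or 4.  With |L| = |N| q this gives (i) and (ii).  For (iii), a C-loop
  of order at most 8 is associative: then q is 2, 4 or 8, with |N| <= 2 if q = 4 (so N
  is central of exponent 2) and N trivial if q = 8 (so L is itself a Steiner loop of
  order 8, the Fano plane), and in each case a short computation with representatives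
  of the cosets gives associativity.  The loops for the last claim are the numbers
  below 2^k under bitwise xor, with bit 3 flipped according to a 2-cochain on the
  three lowest bits.
*)

lemma inj_on_funpow_prime_period:
  assumes "prime p" and period: "(f ^^ p) x = x" and no_fix: "\<And>i. f ((f ^^ i) x) \<noteq> (f ^^ i) x"
  shows "inj_on (\<lambda>i. (f ^^ i) x) {..<p}"
proof -
  have "i = j" if "i \<le> j" "j < p" "(f ^^ i) x = (f ^^ j) x" for i j
  proof -
    define y where "y = (f ^^ i) x"
    have "(f ^^ (j - i)) y = (f ^^ (j - i + i)) x"
      by (simp add: y_def funpow_add)
    also have "\<dots> = y"
      using that by (simp add: y_def)
    finally have dvd_diff: "least_power f y dvd j - i"
      by (rule least_power_minimal)
    have "(f ^^ p) y = (f ^^ i) ((f ^^ p) x)"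
      by (simp add: y_def add.commute flip: funpow_add[THEN fun_cong, unfolded comp_def])
    then have y_period: "(f ^^ p) y = y"
      using period by (simp add: y_def)
    have "least_power f y \<noteq> 1"
      using least_powerI(1)[OF y_period prime_gt_0_nat[OF \<open>prime p\<close>]] no_fix[of i]
      by (auto simp: y_def)
    then have "least_power f y = p"
      using least_power_minimal[OF y_period] \<open>prime p\<close> by (auto simp: prime_nat_iff)
    with dvd_diff that nat_dvd_not_less[of "j - i" p] show "i = j"
      by fastforce
  qed
  then show ?thesis
    by (intro inj_onI) (metis lessThan_iff nat_le_linear)
qed

lemma prime_dvd_card_if_fixpoint_free_period:
  assumes "finite X" "prime p" "r ` X \<subseteq> X"
    and "\<And>x. x \<in> X \<Longrightarrow> (r ^^ p) x = x" and "\<And>x. x \<in> X \<Longrightarrow> r x \<noteq> x"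
  shows "p dvd card X"
  using assms(1,3-5)
proof (induction X rule: finite_psubset_induct)
  case (psubset X)
  have "p > 0"
    using assms(2) by (rule prime_gt_0_nat)
  show ?case
  proof (cases "X = {}")
    case False
    then obtain x where x: "x \<in> X" by blast
    have iterate_in: "(r ^^ i) x \<in> X" for i
      using x psubset.prems(1) by (induction i) auto
    define orb where "orb = (\<lambda>i. (r ^^ i) x) ` {..<p}"
    have orb_sub: "orb \<subseteq> X"
      using iterate_in by (auto simp: orb_def)
    have "x \<in> orb"
      using \<open>p > 0\<close> image_eqI[of x "\<lambda>i. (r ^^ i) x" 0] by (simp add: orb_def)
    have "inj_on (\<lambda>i. (r ^^ i) x) {..<p}"
      using assms(2) x iterate_in psubset.prems by (intro inj_on_funpow_prime_period) auto
    then have card_orb: "card orb = p"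
      by (simp add: orb_def card_image)
    have "r ` (X - orb) \<subseteq> X - orb"
    proof safe
      fix y assume y: "y \<in> X" "y \<notin> orb"
      then show "r y \<in> X" using psubset.prems(1) by auto
      assume "r y \<in> orb"
      then obtain i where i: "r y = (r ^^ i) x" by (auto simp: orb_def)
      have "y = (r ^^ (p - 1)) (r y)"
        using psubset.prems(2)[OF y(1)] \<open>p > 0\<close>
        by (metis Suc_diff_1 funpow_Suc_right comp_apply)
      also have "\<dots> = (r ^^ (p - 1 + i)) x"
        by (simp add: i funpow_add)
      also have "\<dots> = (r ^^ ((p - 1 + i) mod p)) x"
        using psubset.prems(2)[OF x] by (simp add: funpow_mod_eq)
      finally show False
        using y(2) \<open>p > 0\<close> by (auto simp: orb_def)
    qed
    moreover have "X - orb \<subset> X"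
      using \<open>x \<in> orb\<close> x by blast
    ultimately have "p dvd card (X - orb)"
      using psubset.prems by (intro psubset.IH) auto
    moreover have "card X = card orb + card (X - orb)"
      using card_Diff_subset[OF finite_subset[OF orb_sub psubset.hyps] orb_sub]
        card_mono[OF psubset.hyps orb_sub] by simp
    ultimately show ?thesis
      by (simp add: card_orb)
  qed simp
qed

(* The identities of steiner_loop with the unit as a parameter; unique division follows. *)
locale steiner =
  fixes Q :: "'a set" and mult :: "'a \<Rightarrow> 'a \<Rightarrow> 'a" (infixl "\<star>" 70) and e :: 'a
  assumes closed [simp]: "x \<in> Q \<Longrightarrow> y \<in> Q \<Longrightarrow> x \<star> y \<in> Q"
    and unit_in [simp]: "e \<in> Q"
    and unit_left [simp]: "x \<in> Q \<Longrightarrow> e \<star> x = x"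
    and square [simp]: "x \<in> Q \<Longrightarrow> x \<star> x = e"
    and commute: "x \<in> Q \<Longrightarrow> y \<in> Q \<Longrightarrow> x \<star> y = y \<star> x"
    and mult_right_cancel [simp]: "x \<in> Q \<Longrightarrow> y \<in> Q \<Longrightarrow> (y \<star> x) \<star> x = y"
begin

lemma unit_right [simp]: "x \<in> Q \<Longrightarrow> x \<star> e = x"
  using commute[of x e] by simp

lemma mult_left_cancel [simp]: "x \<in> Q \<Longrightarrow> y \<in> Q \<Longrightarrow> x \<star> (x \<star> y) = y"
  by (metis closed commute mult_right_cancel)

lemma mult_cross_cancel [simp]:
  "x \<in> Q \<Longrightarrow> y \<in> Q \<Longrightarrow> (x \<star> y) \<star> x = y"
  "x \<in> Q \<Longrightarrow> y \<in> Q \<Longrightarrow> x \<star> (y \<star> x) = y"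
  by (simp add: commute[of x y], simp add: commute[of y x])

lemma mult_eq_iff_left: "x \<in> Q \<Longrightarrow> y \<in> Q \<Longrightarrow> z \<in> Q \<Longrightarrow> x \<star> y = z \<longleftrightarrow> y = x \<star> z"
  by (metis mult_left_cancel)

lemma mult_eq_iff_right: "x \<in> Q \<Longrightarrow> y \<in> Q \<Longrightarrow> z \<in> Q \<Longrightarrow> x \<star> y = z \<longleftrightarrow> x = z \<star> y"
  by (metis mult_right_cancel)

lemma mult_left_inj [simp]: "x \<in> Q \<Longrightarrow> y \<in> Q \<Longrightarrow> z \<in> Q \<Longrightarrow> x \<star> y = x \<star> z \<longleftrightarrow> y = z"
  by (metis mult_left_cancel)

lemma mult_right_inj [simp]: "x \<in> Q \<Longrightarrow> y \<in> Q \<Longrightarrow> z \<in> Q \<Longrightarrow> y \<star> x = z \<star> x \<longleftrightarrow> y = z"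
  by (metis mult_right_cancel)

lemma mult_eq_unit_iff [simp]:
  "x \<in> Q \<Longrightarrow> y \<in> Q \<Longrightarrow> x \<star> y = e \<longleftrightarrow> x = y"
  "x \<in> Q \<Longrightarrow> y \<in> Q \<Longrightarrow> e = x \<star> y \<longleftrightarrow> x = y"
  by (metis square mult_left_inj)+

lemma mult_eq_left_iff [simp]:
  "x \<in> Q \<Longrightarrow> y \<in> Q \<Longrightarrow> x \<star> y = x \<longleftrightarrow> y = e"
  "x \<in> Q \<Longrightarrow> y \<in> Q \<Longrightarrow> x = x \<star> y \<longleftrightarrow> y = e"
  by (metis unit_right unit_in mult_left_inj)+

lemma mult_eq_right_imp_unit: "x \<in> Q \<Longrightarrow> y \<in> Q \<Longrightarrow> x \<star> y = y \<Longrightarrow> x = e"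
  by (metis unit_left unit_in mult_right_inj)

lemma card_mod_6:
  assumes "finite Q" and "Q \<noteq> {e}"
  shows "card Q mod 6 \<in> {2, 4}"
proof -
  obtain a where a: "a \<in> Q" "a \<noteq> e"
    using assms(2) unit_in by blast
  define q where "q = card Q"
  have "q \<ge> 2"
    using card_mono[OF assms(1), of "{e, a}"] a by (simp add: q_def)
  have "2 dvd card (Q - {e, a})"
  proof (rule prime_dvd_card_if_fixpoint_free_period[where r = "(\<star>) a"])
    show "(\<star>) a ` (Q - {e, a}) \<subseteq> Q - {e, a}"
      using a by auto
    show "((\<star>) a ^^ 2) x = x" if "x \<in> Q - {e, a}" for x
      using a that by (simp add: numeral_2_eq_2)
    show "a \<star> x \<noteq> x" if "x \<in> Q - {e, a}" for x
      using a that mult_eq_right_imp_unit by blast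
  qed (use assms(1) in simp_all)
  moreover have "card (Q - {e, a}) = q - 2"
    using assms(1) a by (simp add: card_Diff_subset q_def)
  ultimately have "2 dvd q - 2"
    by simp
  define P where "P = Q - {e}"
  define pairs where "pairs = P \<times> P - (\<lambda>x. (x, x)) ` P"
  have "3 dvd card pairs"
  proof (rule prime_dvd_card_if_fixpoint_free_period[where r = "\<lambda>(x, y). (y, x \<star> y)"])
    show "(\<lambda>(x, y). (y, x \<star> y)) ` pairs \<subseteq> pairs"
      by (auto simp: pairs_def P_def dest: mult_eq_right_imp_unit)
    show "((\<lambda>(x, y). (y, x \<star> y)) ^^ 3) xy = xy" if "xy \<in> pairs" for xy
      using that by (auto simp: pairs_def P_def numeral_3_eq_3)
  qed (use assms(1) in \<open>auto simp: pairs_def P_def\<close>)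
  moreover have "card pairs = (q - 1) * (q - 1) - (q - 1)"
    using assms(1) unfolding pairs_def P_def q_def
    by (subst card_Diff_subset) (auto simp: card_cartesian_product card_image inj_on_def)
  moreover have "(q - 1) * (q - 1) - (q - 1) = (q - 1) * (q - 2)"
    by (simp add: diff_mult_distrib2)
  ultimately have "3 dvd q - 1 \<or> 3 dvd q - 2"
    by (simp add: prime_dvd_mult_iff)
  with \<open>2 dvd q - 2\<close> \<open>q \<ge> 2\<close> have "q mod 6 = 2 \<or> q mod 6 = 4"
    by presburger
  then show ?thesis
    by (simp add: q_def)
qed

lemma associative_if_card_8:
  assumes "finite Q" and "card Q = 8" and x: "x \<in> Q" and y: "y \<in> Q" and z: "z \<in> Q"
  shows "x \<star> (y \<star> z) = (x \<star> y) \<star> z"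
proof (cases "x = e \<or> y = e \<or> z = e \<or> y = x \<or> z = y \<or> z = x \<or> z = x \<star> y")
  case True
  then show ?thesis
    using x y z by (elim disjE) simp_all
next
  case False
  then have ne: "x \<noteq> e" "y \<noteq> e" "z \<noteq> e" "x \<noteq> y" "y \<noteq> z" "x \<noteq> z" "z \<noteq> x \<star> y"
    by auto
  have ne': "x \<noteq> y \<star> z" "y \<noteq> x \<star> z" "x \<star> y \<noteq> y \<star> z" "y \<noteq> x \<star> y" "z \<noteq> x \<star> z" "z \<noteq> y \<star> z"
    using x y z ne by (metis commute mult_left_cancel mult_eq_right_imp_unit)+
  txt \<open>The seven elements of T are distinct, and both products are the eighth element.\<close>
  define T where "T = {e, x, y, x \<star> y, z, x \<star> z, y \<star> z}"
  have "card T = 7"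
    using x y z ne ne' by (simp add: T_def)
  have "T \<subseteq> Q"
    using x y z by (simp add: T_def)
  then have "card (Q - T) = 1"
    using assms(1,2) \<open>card T = 7\<close> by (simp add: card_Diff_subset finite_subset)
  then obtain w where w: "Q - T = {w}"
    by (rule card_1_singletonE)
  have "x \<star> (y \<star> z) \<notin> T"
    using x y z ne ne' mult_eq_right_imp_unit[of x "y \<star> z"]
    by (auto simp: T_def mult_eq_iff_left[of x "y \<star> z"])
  moreover have "(x \<star> y) \<star> z \<notin> T"
    using x y z ne ne'
    by (auto simp: T_def mult_eq_iff_right[of "x \<star> y" z])
  ultimately show ?thesis
    using x y z w by (metis DiffI closed singletonD)
qed

end

locale cloop =
  fixes L :: "'a set" and mult :: "'a \<Rightarrow> 'a \<Rightarrow> 'a" (infixl "\<cdot>" 70) and e :: 'a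
  assumes c_loop: "c_loop L (\<cdot>)"
    and unit_in [simp]: "e \<in> L"
    and unit_left [simp]: "x \<in> L \<Longrightarrow> e \<cdot> x = x"
    and unit_right [simp]: "x \<in> L \<Longrightarrow> x \<cdot> e = x"
begin

lemma closed [simp]: "x \<in> L \<Longrightarrow> y \<in> L \<Longrightarrow> x \<cdot> y \<in> L"
  using c_loop by (simp add: c_loop_def loop_def)

lemma left_division: "a \<in> L \<Longrightarrow> b \<in> L \<Longrightarrow> \<exists>!x. x \<in> L \<and> a \<cdot> x = b"
  using c_loop by (simp add: c_loop_def loop_def)

lemma right_division: "a \<in> L \<Longrightarrow> b \<in> L \<Longrightarrow> \<exists>!y. y \<in> L \<and> y \<cdot> a = b"
  using c_loop by (simp add: c_loop_def loop_def)

lemma c_law: "x \<in> L \<Longrightarrow> y \<in> L \<Longrightarrow> z \<in> L \<Longrightarrow> x \<cdot> (y \<cdot> (y \<cdot> z)) = ((x \<cdot> y) \<cdot> y) \<cdot> z"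
  using c_loop by (simp add: c_loop_def)

lemma mult_left_inj [simp]: "a \<in> L \<Longrightarrow> x \<in> L \<Longrightarrow> y \<in> L \<Longrightarrow> a \<cdot> x = a \<cdot> y \<longleftrightarrow> x = y"
  using left_division[of a "a \<cdot> x"] by (metis closed)

lemma mult_right_inj [simp]: "a \<in> L \<Longrightarrow> x \<in> L \<Longrightarrow> y \<in> L \<Longrightarrow> x \<cdot> a = y \<cdot> a \<longleftrightarrow> x = y"
  using right_division[of a "x \<cdot> a"] by (metis closed)

lemma left_alternative: "y \<in> L \<Longrightarrow> z \<in> L \<Longrightarrow> y \<cdot> (y \<cdot> z) = (y \<cdot> y) \<cdot> z"
  using c_law[of e y z] by simp

lemma right_alternative: "x \<in> L \<Longrightarrow> y \<in> L \<Longrightarrow> (x \<cdot> y) \<cdot> y = x \<cdot> (y \<cdot> y)"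
  using c_law[of x y e] by simp

lemma square_middle_assoc: "x \<in> L \<Longrightarrow> y \<in> L \<Longrightarrow> z \<in> L \<Longrightarrow> x \<cdot> ((y \<cdot> y) \<cdot> z) = (x \<cdot> (y \<cdot> y)) \<cdot> z"
  using c_law[of x y z] by (simp add: left_alternative right_alternative)

definition loop_inv :: "'a \<Rightarrow> 'a" where
  "loop_inv y = (THE r. r \<in> L \<and> y \<cdot> r = e)"

lemma loop_inv_in [simp]: "y \<in> L \<Longrightarrow> loop_inv y \<in> L"
  and mult_loop_inv_right [simp]: "y \<in> L \<Longrightarrow> y \<cdot> loop_inv y = e"
  using theI'[OF left_division[of y e]] by (simp_all add: loop_inv_def)

lemma right_inverse_property [simp]: "w \<in> L \<Longrightarrow> y \<in> L \<Longrightarrow> (w \<cdot> y) \<cdot> loop_inv y = w"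
proof -
  assume w: "w \<in> L" and y: "y \<in> L"
  obtain x where x: "x \<in> L" "x \<cdot> y = w"
    using right_division[OF y w] by blast
  show ?thesis
    using c_law[of x y "loop_inv y"] x y by simp
qed

lemma mult_loop_inv_left [simp]: "y \<in> L \<Longrightarrow> loop_inv y \<cdot> y = e"
  and left_inverse_property [simp]: "y \<in> L \<Longrightarrow> u \<in> L \<Longrightarrow> loop_inv y \<cdot> (y \<cdot> u) = u"
proof -
  assume y: "y \<in> L"
  obtain l where l: "l \<in> L" "l \<cdot> y = e"
    using right_division[OF y unit_in] by blast
  have l_cancel: "l \<cdot> (y \<cdot> u) = u" if u: "u \<in> L" for u
  proof -
    obtain z where z: "z \<in> L" "y \<cdot> z = u"
      using left_division[OF y u] by blast
    show ?thesis
      using c_law[of l y z] l y z by simp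
  qed
  have "l = loop_inv y"
    using l_cancel[of "loop_inv y"] l(1) y by simp
  then show "loop_inv y \<cdot> y = e"
    using l by simp
  assume "u \<in> L"
  then show "loop_inv y \<cdot> (y \<cdot> u) = u"
    using l_cancel \<open>l = loop_inv y\<close> by simp
qed

lemma loop_inv_loop_inv [simp]: "y \<in> L \<Longrightarrow> loop_inv (loop_inv y) = y"
  using mult_loop_inv_right[of "loop_inv y"] mult_loop_inv_left[of y]
    mult_left_inj[of "loop_inv y" "loop_inv (loop_inv y)" y]
  by simp

lemma left_inverse_property' [simp]: "y \<in> L \<Longrightarrow> u \<in> L \<Longrightarrow> y \<cdot> (loop_inv y \<cdot> u) = u"
  using left_inverse_property[of "loop_inv y" u] by simp

lemma right_inverse_property' [simp]: "y \<in> L \<Longrightarrow> w \<in> L \<Longrightarrow> (w \<cdot> loop_inv y) \<cdot> y = w"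
  using right_inverse_property[of w "loop_inv y"] by simp

lemma loop_inv_mult: "x \<in> L \<Longrightarrow> y \<in> L \<Longrightarrow> loop_inv (x \<cdot> y) = loop_inv y \<cdot> loop_inv x"
proof -
  assume x: "x \<in> L" and y: "y \<in> L"
  have "loop_inv (x \<cdot> y) \<cdot> x = loop_inv y"
    using left_inverse_property[of "x \<cdot> y" "loop_inv y"] x y by simp
  then have "(loop_inv (x \<cdot> y) \<cdot> x) \<cdot> loop_inv x = loop_inv y \<cdot> loop_inv x"
    by simp
  then show ?thesis
    using x y by simp
qed

abbreviation N :: "'a set" where
  "N \<equiv> nucleus L (\<cdot>)"

lemma nucleusI:
  assumes "a \<in> L"
    and "\<And>y z. y \<in> L \<Longrightarrow> z \<in> L \<Longrightarrow> a \<cdot> (y \<cdot> z) = (a \<cdot> y) \<cdot> z"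
    and "\<And>y z. y \<in> L \<Longrightarrow> z \<in> L \<Longrightarrow> y \<cdot> (a \<cdot> z) = (y \<cdot> a) \<cdot> z"
    and "\<And>y z. y \<in> L \<Longrightarrow> z \<in> L \<Longrightarrow> y \<cdot> (z \<cdot> a) = (y \<cdot> z) \<cdot> a"
  shows "a \<in> N"
  using assms unfolding nucleus_def by blast

lemma nucleus_in [simp]: "a \<in> N \<Longrightarrow> a \<in> L"
  unfolding nucleus_def by blast

lemma nucleus_assoc_left: "a \<in> N \<Longrightarrow> y \<in> L \<Longrightarrow> z \<in> L \<Longrightarrow> a \<cdot> (y \<cdot> z) = (a \<cdot> y) \<cdot> z"
  and nucleus_assoc_middle: "a \<in> N \<Longrightarrow> y \<in> L \<Longrightarrow> z \<in> L \<Longrightarrow> y \<cdot> (a \<cdot> z) = (y \<cdot> a) \<cdot> z"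
  and nucleus_assoc_right: "a \<in> N \<Longrightarrow> y \<in> L \<Longrightarrow> z \<in> L \<Longrightarrow> y \<cdot> (z \<cdot> a) = (y \<cdot> z) \<cdot> a"
  unfolding nucleus_def by blast+

lemma unit_in_nucleus [simp]: "e \<in> N"
  by (rule nucleusI) auto

lemma middle_nuclear_loop_inv_left:
  assumes a: "a \<in> L" and middle: "\<And>u z. u \<in> L \<Longrightarrow> z \<in> L \<Longrightarrow> u \<cdot> (a \<cdot> z) = (u \<cdot> a) \<cdot> z"
    and y: "y \<in> L" and z: "z \<in> L"
  shows "loop_inv a \<cdot> (y \<cdot> z) = (loop_inv a \<cdot> y) \<cdot> z"
proof -
  define q where "q = loop_inv a \<cdot> y"
  have q: "q \<in> L" and inv_q: "loop_inv q = loop_inv y \<cdot> a"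
    using a y loop_inv_mult[of "loop_inv a" y] by (simp_all add: q_def)
  have "loop_inv q \<cdot> (loop_inv a \<cdot> (y \<cdot> z)) = loop_inv y \<cdot> (a \<cdot> (loop_inv a \<cdot> (y \<cdot> z)))"
    using middle[of "loop_inv y" "loop_inv a \<cdot> (y \<cdot> z)"] inv_q a y z by simp
  also have "\<dots> = z"
    using a y z by simp
  finally have "q \<cdot> (loop_inv q \<cdot> (loop_inv a \<cdot> (y \<cdot> z))) = q \<cdot> z"
    by simp
  then show ?thesis
    using q a y z by (simp add: q_def)
qed

lemma middle_nuclear_loop_inv_right:
  assumes a: "a \<in> L" and middle: "\<And>u z. u \<in> L \<Longrightarrow> z \<in> L \<Longrightarrow> u \<cdot> (a \<cdot> z) = (u \<cdot> a) \<cdot> z"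
    and y: "y \<in> L" and z: "z \<in> L"
  shows "y \<cdot> (z \<cdot> loop_inv a) = (y \<cdot> z) \<cdot> loop_inv a"
proof -
  define q where "q = z \<cdot> loop_inv a"
  have q: "q \<in> L" and inv_q: "loop_inv q = a \<cdot> loop_inv z"
    using a z loop_inv_mult[of z "loop_inv a"] by (simp_all add: q_def)
  have "((y \<cdot> z) \<cdot> loop_inv a) \<cdot> loop_inv q = (((y \<cdot> z) \<cdot> loop_inv a) \<cdot> a) \<cdot> loop_inv z"
    using middle[of "(y \<cdot> z) \<cdot> loop_inv a" "loop_inv z"] inv_q a y z by simp
  also have "\<dots> = y"
    using a y z by simp
  finally have "(((y \<cdot> z) \<cdot> loop_inv a) \<cdot> loop_inv q) \<cdot> q = y \<cdot> q"
    by simp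
  then show ?thesis
    using q a y z by (simp add: q_def)
qed

lemma square_in_nucleus [simp]: "x \<in> L \<Longrightarrow> x \<cdot> x \<in> N"
proof -
  assume x: "x \<in> L"
  have middle: "u \<cdot> ((loop_inv x \<cdot> loop_inv x) \<cdot> z) = (u \<cdot> (loop_inv x \<cdot> loop_inv x)) \<cdot> z"
    if "u \<in> L" "z \<in> L" for u z
    using square_middle_assoc x that by simp
  have inv_square: "loop_inv (loop_inv x \<cdot> loop_inv x) = x \<cdot> x"
    using loop_inv_mult[of "loop_inv x" "loop_inv x"] x by simp
  show ?thesis
  proof (rule nucleusI)
    fix y z assume "y \<in> L" "z \<in> L"
    then show "x \<cdot> x \<cdot> (y \<cdot> z) = x \<cdot> x \<cdot> y \<cdot> z"
      using middle_nuclear_loop_inv_left[OF _ middle] inv_square x by (metis closed loop_inv_in)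
    show "y \<cdot> (x \<cdot> x \<cdot> z) = y \<cdot> (x \<cdot> x) \<cdot> z"
      using square_middle_assoc x \<open>y \<in> L\<close> \<open>z \<in> L\<close> by simp
    show "y \<cdot> (z \<cdot> (x \<cdot> x)) = y \<cdot> z \<cdot> (x \<cdot> x)"
      using middle_nuclear_loop_inv_right[OF _ middle] inv_square x \<open>y \<in> L\<close> \<open>z \<in> L\<close>
      by (metis closed loop_inv_in)
  qed (use x in simp)
qed

lemma mult_in_nucleus [simp]: "a \<in> N \<Longrightarrow> b \<in> N \<Longrightarrow> a \<cdot> b \<in> N"
proof (rule nucleusI)
  fix y z assume a: "a \<in> N" and b: "b \<in> N" and [simp]: "y \<in> L" "z \<in> L"
  note [simp] = nucleus_in[OF a] nucleus_in[OF b]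
  show "a \<cdot> b \<cdot> (y \<cdot> z) = a \<cdot> b \<cdot> y \<cdot> z"
    using nucleus_assoc_left[OF a, of b "y \<cdot> z"] nucleus_assoc_left[OF b, of y z]
      nucleus_assoc_left[OF a, of "b \<cdot> y" z] nucleus_assoc_left[OF a, of b y] by simp
  show "y \<cdot> (a \<cdot> b \<cdot> z) = y \<cdot> (a \<cdot> b) \<cdot> z"
    using nucleus_assoc_left[OF a, of b z] nucleus_assoc_middle[OF a, of y "b \<cdot> z"]
      nucleus_assoc_middle[OF b, of "y \<cdot> a" z] nucleus_assoc_middle[OF a, of y b] by simp
  show "y \<cdot> (z \<cdot> (a \<cdot> b)) = y \<cdot> z \<cdot> (a \<cdot> b)"
    using nucleus_assoc_middle[OF a, of z b] nucleus_assoc_right[OF b, of y "z \<cdot> a"]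
      nucleus_assoc_right[OF a, of y z] nucleus_assoc_middle[OF a, of "y \<cdot> z" b] by simp
qed simp

lemma loop_inv_in_nucleus [simp]: "a \<in> N \<Longrightarrow> loop_inv a \<in> N"
proof (rule nucleusI)
  fix y z assume a: "a \<in> N" and [simp]: "y \<in> L" "z \<in> L"
  note [simp] = nucleus_in[OF a]
  show "loop_inv a \<cdot> (y \<cdot> z) = loop_inv a \<cdot> y \<cdot> z"
    by (rule middle_nuclear_loop_inv_left) (auto intro: nucleus_assoc_middle[OF a])
  show "y \<cdot> (z \<cdot> loop_inv a) = y \<cdot> z \<cdot> loop_inv a"
    by (rule middle_nuclear_loop_inv_right) (auto intro: nucleus_assoc_middle[OF a])
  have "y \<cdot> (loop_inv a \<cdot> z) = ((y \<cdot> loop_inv a) \<cdot> a) \<cdot> (loop_inv a \<cdot> z)"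
    by simp
  also have "\<dots> = (y \<cdot> loop_inv a) \<cdot> (a \<cdot> (loop_inv a \<cdot> z))"
    using nucleus_assoc_middle[OF a, of "y \<cdot> loop_inv a" "loop_inv a \<cdot> z"] by simp
  also have "\<dots> = (y \<cdot> loop_inv a) \<cdot> z"
    by simp
  finally show "y \<cdot> (loop_inv a \<cdot> z) = y \<cdot> loop_inv a \<cdot> z" .
qed simp

lemma nucleus_normal:
  assumes a: "a \<in> N" and x: "x \<in> L"
  shows "\<exists>b\<in>N. a \<cdot> x = x \<cdot> b"
proof -
  define s where "s = loop_inv x \<cdot> loop_inv x"
  have s: "s \<in> N" and sx: "s \<cdot> x = loop_inv x"
    using x by (simp_all add: s_def right_alternative)
  have "(x \<cdot> a) \<cdot> (x \<cdot> a) = ((x \<cdot> a) \<cdot> x) \<cdot> a"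
    using nucleus_assoc_right[OF a, of "x \<cdot> a" x] a x by simp
  then have "(x \<cdot> a) \<cdot> x = ((x \<cdot> a) \<cdot> (x \<cdot> a)) \<cdot> loop_inv a"
    using a x by simp
  then have xax: "(x \<cdot> a) \<cdot> x \<in> N"
    using a x by simp
  have "loop_inv x \<cdot> (a \<cdot> x) = s \<cdot> (x \<cdot> (a \<cdot> x))"
    using sx nucleus_assoc_left[OF s, of x "a \<cdot> x"] a x by simp
  also have "\<dots> = s \<cdot> ((x \<cdot> a) \<cdot> x)"
    using nucleus_assoc_middle[OF a, of x x] x by simp
  finally have "loop_inv x \<cdot> (a \<cdot> x) \<in> N"
    using s xax by simp
  moreover have "a \<cdot> x = x \<cdot> (loop_inv x \<cdot> (a \<cdot> x))"
    using a x by simp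
  ultimately show ?thesis
    by blast
qed

definition coset :: "'a \<Rightarrow> 'a set" where
  "coset x = (\<lambda>n. x \<cdot> n) ` N"

lemma mem_coset: "y \<in> coset x \<longleftrightarrow> (\<exists>n\<in>N. y = x \<cdot> n)"
  unfolding coset_def by auto

lemma coset_subset: "x \<in> L \<Longrightarrow> coset x \<subseteq> L"
  unfolding coset_def by auto

lemma self_in_coset [simp]: "x \<in> L \<Longrightarrow> x \<in> coset x"
  unfolding mem_coset by (metis unit_in_nucleus unit_right)

lemma card_coset: "x \<in> L \<Longrightarrow> card (coset x) = card N"
  unfolding coset_def by (rule card_image) (auto simp: inj_on_def)

lemma coset_eq:
  assumes x: "x \<in> L" and y: "y \<in> coset x"
  shows "coset y = coset x"
proof -
  obtain n where n: "n \<in> N" "y = x \<cdot> n"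
    using y mem_coset by blast
  have "x = y \<cdot> loop_inv n"
    using n x by simp
  then show ?thesis
    using n x nucleus_assoc_right[of _ x n] nucleus_assoc_right[of _ y "loop_inv n"]
    unfolding mem_coset set_eq_iff
    by (metis closed loop_inv_in_nucleus mult_in_nucleus nucleus_in)
qed

lemma coset_eq_iff: "x \<in> L \<Longrightarrow> y \<in> L \<Longrightarrow> coset x = coset y \<longleftrightarrow> y \<in> coset x"
  using coset_eq self_in_coset by metis

lemma coset_unit: "coset e = N"
  unfolding coset_def by (auto simp: image_iff)

lemma coset_eq_nucleus_iff: "x \<in> L \<Longrightarrow> coset x = N \<longleftrightarrow> x \<in> N"
  using coset_eq_iff[of e x] coset_unit by auto

lemma coset_mult:
  assumes x: "x \<in> L" and w: "w \<in> L" and y: "y \<in> coset x" and z: "z \<in> coset w"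
  shows "coset (y \<cdot> z) = coset (x \<cdot> w)"
proof -
  obtain n1 where n1: "n1 \<in> N" "y = x \<cdot> n1"
    using y mem_coset by blast
  obtain n2 where n2: "n2 \<in> N" "z = w \<cdot> n2"
    using z mem_coset by blast
  obtain n3 where n3: "n3 \<in> N" "n1 \<cdot> w = w \<cdot> n3"
    using nucleus_normal[OF n1(1) w] by blast
  have "y \<cdot> z = ((x \<cdot> n1) \<cdot> w) \<cdot> n2"
    using nucleus_assoc_right[OF n2(1), of "x \<cdot> n1" w] n1 n2 x w by simp
  also have "\<dots> = (x \<cdot> (w \<cdot> n3)) \<cdot> n2"
    using nucleus_assoc_middle[OF n1(1), of x w] n3 x w by simp
  also have "\<dots> = ((x \<cdot> w) \<cdot> n3) \<cdot> n2"
    using nucleus_assoc_right[OF n3(1), of x w] x w by simp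
  also have "\<dots> = (x \<cdot> w) \<cdot> (n3 \<cdot> n2)"
    using nucleus_assoc_right[OF n2(1), of "x \<cdot> w" n3] x w n3 by simp
  finally have "y \<cdot> z \<in> coset (x \<cdot> w)"
    using mem_coset n2 n3 by auto
  then show ?thesis
    by (rule coset_eq[OF closed[OF x w]])
qed

lemma coset_square: "x \<in> L \<Longrightarrow> coset (x \<cdot> x) = N"
  by (simp add: coset_eq_nucleus_iff)

lemma coset_left_alternative:
  assumes x: "x \<in> L" and y: "y \<in> L"
  shows "coset (x \<cdot> (x \<cdot> y)) = coset y"
proof -
  obtain b where "b \<in> N" "(x \<cdot> x) \<cdot> y = y \<cdot> b"
    using nucleus_normal[of "x \<cdot> x" y] x y by auto
  then show ?thesis
    using coset_eq[OF y] x y by (auto simp: left_alternative mem_coset)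
qed

lemma loop_inv_in_coset:
  assumes "x \<in> L"
  shows "loop_inv x \<in> coset x"
proof -
  have "loop_inv x = x \<cdot> (loop_inv x \<cdot> loop_inv x)"
    using assms by simp
  then show ?thesis
    unfolding mem_coset using assms loop_inv_in square_in_nucleus by blast
qed

lemma coset_commute:
  assumes x: "x \<in> L" and y: "y \<in> L"
  shows "coset (x \<cdot> y) = coset (y \<cdot> x)"
proof -
  have "coset (loop_inv y \<cdot> loop_inv x) = coset (y \<cdot> x)"
    using coset_mult[OF y x loop_inv_in_coset[OF y] loop_inv_in_coset[OF x]] .
  moreover have "coset (loop_inv (x \<cdot> y)) = coset (x \<cdot> y)"
    using coset_eq[OF closed[OF x y] loop_inv_in_coset[OF closed[OF x y]]] .
  ultimately show ?thesis
    using loop_inv_mult[OF x y] by simp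
qed

definition cosets :: "'a set set" where
  "cosets = coset ` L"

definition quotient_mult :: "'a set \<Rightarrow> 'a set \<Rightarrow> 'a set" where
  "quotient_mult A B = coset ((SOME x. x \<in> A) \<cdot> (SOME y. y \<in> B))"

lemma quotient_mult_coset [simp]:
  assumes "x \<in> L" and "y \<in> L"
  shows "quotient_mult (coset x) (coset y) = coset (x \<cdot> y)"
proof -
  have "(SOME x'. x' \<in> coset x) \<in> coset x" "(SOME y'. y' \<in> coset y) \<in> coset y"
    using assms by (meson self_in_coset someI)+
  then show ?thesis
    unfolding quotient_mult_def using coset_mult assms by blast
qed

lemma cosetsE:
  assumes "A \<in> cosets"
  obtains x where "x \<in> L" and "A = coset x"
  using assms unfolding cosets_def by blast

lemma finite_cosets: "finite L \<Longrightarrow> finite cosets"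
  unfolding cosets_def by simp

lemma nucleus_in_cosets: "N \<in> cosets"
  unfolding cosets_def using coset_unit unit_in by blast

lemma steiner_quotient: "steiner cosets quotient_mult N"
proof
  fix A B assume "A \<in> cosets" "B \<in> cosets"
  then obtain x y where "x \<in> L" "A = coset x" "y \<in> L" "B = coset y"
    by (meson cosetsE)
  then show "quotient_mult A B \<in> cosets"
    and "quotient_mult A B = quotient_mult B A"
    and "quotient_mult (quotient_mult B A) A = B"
    and "quotient_mult N A = A"
    and "quotient_mult A A = N"
    by (simp_all add: cosets_def coset_commute coset_left_alternative coset_square
        flip: coset_unit)
qed (rule nucleus_in_cosets)

lemma card_eq_card_nucleus_mult_card_cosets:
  assumes "finite L"
  shows "card L = card N * card cosets"
proof -
  have "\<Union>cosets = L"
    unfolding cosets_def using coset_subset self_in_coset by blast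
  moreover have "card N * card cosets = card (\<Union>cosets)"
  proof (rule card_partition)
    show "finite cosets" "finite (\<Union>cosets)"
      using assms \<open>\<Union>cosets = L\<close> by (simp_all add: finite_cosets)
    show "card A = card N" if "A \<in> cosets" for A
      using that card_coset by (auto elim: cosetsE)
    show "A \<inter> B = {}" if A: "A \<in> cosets" and B: "B \<in> cosets" and "A \<noteq> B" for A B
    proof -
      obtain x y where "x \<in> L" "A = coset x" "y \<in> L" "B = coset y"
        using A B by (meson cosetsE)
      then show ?thesis
        using coset_eq \<open>A \<noteq> B\<close> by blast
    qed
  qed
  ultimately show ?thesis
    by simp
qed

lemma card_cosets_mod_6:
  assumes "finite L" and "nonassociative L (\<cdot>)"
  shows "card cosets mod 6 \<in> {2, 4}"
proof (rule steiner.card_mod_6[OF steiner_quotient])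
  show "finite cosets"
    using assms(1) by (rule finite_cosets)
  show "cosets \<noteq> {N}"
  proof
    assume "cosets = {N}"
    then have "L \<subseteq> N"
      unfolding cosets_def using coset_eq_nucleus_iff by blast
    then show False
      using assms(2) nucleus_assoc_left unfolding nonassociative_def by blast
  qed
qed

lemma assoc_if_nuclear:
  "a \<in> L \<Longrightarrow> b \<in> L \<Longrightarrow> c \<in> L \<Longrightarrow> a \<in> N \<or> b \<in> N \<or> c \<in> N \<Longrightarrow> a \<cdot> (b \<cdot> c) = (a \<cdot> b) \<cdot> c"
  using nucleus_assoc_left nucleus_assoc_middle nucleus_assoc_right by blast

lemma assoc_if_second_in_coset_first:
  assumes a: "a \<in> L" and c: "c \<in> L" and b: "b \<in> coset a"
  shows "a \<cdot> (b \<cdot> c) = (a \<cdot> b) \<cdot> c"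
proof -
  obtain n where n: "n \<in> N" "b = a \<cdot> n"
    using b mem_coset by blast
  have "a \<cdot> (b \<cdot> c) = a \<cdot> (a \<cdot> (n \<cdot> c))"
    using nucleus_assoc_middle[OF n(1), of a c] n a c by simp
  also have "\<dots> = (a \<cdot> a) \<cdot> (n \<cdot> c)"
    using left_alternative a c n by simp
  also have "\<dots> = ((a \<cdot> a) \<cdot> n) \<cdot> c"
    using nucleus_assoc_middle[OF n(1), of "a \<cdot> a" c] a c by simp
  also have "\<dots> = (a \<cdot> b) \<cdot> c"
    using left_alternative[of a n] n a by simp
  finally show ?thesis .
qed

lemma assoc_if_third_in_coset_second:
  assumes a: "a \<in> L" and b: "b \<in> L" and c: "c \<in> coset b"
  shows "a \<cdot> (b \<cdot> c) = (a \<cdot> b) \<cdot> c"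
proof -
  obtain n where n: "n \<in> N" "c = b \<cdot> n"
    using c mem_coset by blast
  have "a \<cdot> (b \<cdot> c) = a \<cdot> ((b \<cdot> b) \<cdot> n)"
    using left_alternative[of b n] n b by simp
  also have "\<dots> = (a \<cdot> (b \<cdot> b)) \<cdot> n"
    using nucleus_assoc_right[OF n(1), of a "b \<cdot> b"] a b by simp
  also have "\<dots> = ((a \<cdot> b) \<cdot> b) \<cdot> n"
    using right_alternative a b by simp
  also have "\<dots> = (a \<cdot> b) \<cdot> c"
    using nucleus_assoc_right[OF n(1), of "a \<cdot> b" b] n a b by simp
  finally show ?thesis .
qed

lemma assoc_if_third_in_coset_product:
  assumes a: "a \<in> L" and b: "b \<in> L" and c: "c \<in> coset (a \<cdot> b)"
  shows "a \<cdot> (b \<cdot> c) = (a \<cdot> b) \<cdot> c"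
proof -
  obtain n where n: "n \<in> N" "c = (a \<cdot> b) \<cdot> n"
    using c mem_coset by blast
  define s where "s = (a \<cdot> b) \<cdot> (a \<cdot> b)"
  have s: "s \<in> N"
    using a b by (simp add: s_def)
  have "a \<cdot> b = loop_inv (a \<cdot> b) \<cdot> s"
    using a b by (simp add: s_def)
  also have "\<dots> = loop_inv b \<cdot> (loop_inv a \<cdot> s)"
    using nucleus_assoc_right[OF s, of "loop_inv b" "loop_inv a"] a b by (simp add: loop_inv_mult)
  finally have "a \<cdot> (b \<cdot> (a \<cdot> b)) = s"
    using a b s by simp
  then show ?thesis
    using n a b nucleus_assoc_right[OF n(1), of b "a \<cdot> b"]
      nucleus_assoc_right[OF n(1), of a "b \<cdot> (a \<cdot> b)"]
      nucleus_assoc_right[OF n(1), of "a \<cdot> b" "a \<cdot> b"]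
    by (simp add: s_def)
qed

definition nucleus_central_exponent_2 :: bool where
  "nucleus_central_exponent_2 \<longleftrightarrow> (\<forall>v\<in>N. v \<cdot> v = e \<and> (\<forall>x\<in>L. v \<cdot> x = x \<cdot> v))"

lemma assoc_if_third_in_coset_first:
  assumes central: nucleus_central_exponent_2 and a: "a \<in> L" and b: "b \<in> L" and c: "c \<in> coset a"
  shows "a \<cdot> (b \<cdot> c) = (a \<cdot> b) \<cdot> c"
proof -
  obtain n where n: "n \<in> N" "c = a \<cdot> n"
    using c mem_coset by blast
  have "b \<cdot> a \<in> coset (a \<cdot> b)"
    using coset_commute[OF a b] coset_eq_iff[of "a \<cdot> b" "b \<cdot> a"] a b by simp
  then obtain v where v: "v \<in> N" "b \<cdot> a = (a \<cdot> b) \<cdot> v"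
    using mem_coset by blast
  have vv: "v \<cdot> v = e" and v_central: "\<And>x. x \<in> L \<Longrightarrow> v \<cdot> x = x \<cdot> v"
    using central v unfolding nucleus_central_exponent_2_def by auto
  have "(a \<cdot> a) \<cdot> b = b \<cdot> (a \<cdot> a)"
    using central a b unfolding nucleus_central_exponent_2_def by simp
  then have "a \<cdot> (b \<cdot> a) = (b \<cdot> (a \<cdot> a)) \<cdot> v"
    using v nucleus_assoc_right[OF v(1), of a "a \<cdot> b"] left_alternative a b by simp
  moreover have "a \<cdot> b = (b \<cdot> a) \<cdot> v"
    using v vv nucleus_assoc_right[OF v(1), of "a \<cdot> b" v] a b by simp
  then have "(a \<cdot> b) \<cdot> a = (b \<cdot> (a \<cdot> a)) \<cdot> v"
    using nucleus_assoc_middle[OF v(1), of "b \<cdot> a" a] v_central[of a]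
      nucleus_assoc_right[OF v(1), of "b \<cdot> a" a] right_alternative[of b a] a b v(1)
    by simp
  ultimately have flexible: "a \<cdot> (b \<cdot> a) = (a \<cdot> b) \<cdot> a"
    by simp
  show ?thesis
    using n a b flexible nucleus_assoc_right[OF n(1), of b a]
      nucleus_assoc_right[OF n(1), of a "b \<cdot> a"] nucleus_assoc_right[OF n(1), of "a \<cdot> b" a]
    by simp
qed

lemma assoc_if_two_cosets:
  assumes "finite L" and "card cosets = 2" and a: "a \<in> L" and b: "b \<in> L" and c: "c \<in> L"
  shows "a \<cdot> (b \<cdot> c) = (a \<cdot> b) \<cdot> c"
proof (cases "a \<in> N \<or> b \<in> N \<or> c \<in> N")
  case True
  then show ?thesis
    using assoc_if_nuclear a b c by blast
next
  case False
  have "card (cosets - {N}) = 1"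
    using assms(1,2) nucleus_in_cosets finite_cosets by simp
  then obtain A where A: "cosets - {N} = {A}"
    by (rule card_1_singletonE)
  have "coset a \<in> cosets - {N}" "coset b \<in> cosets - {N}"
    using False a b coset_eq_nucleus_iff by (auto simp: cosets_def)
  then have "coset a = coset b"
    unfolding A by simp
  then show ?thesis
    using assoc_if_second_in_coset_first a b c coset_eq_iff by simp
qed

lemma nucleus_central_exponent_2_if_card_le_2:
  assumes "finite L" and "card N \<le> 2"
  shows nucleus_central_exponent_2
  unfolding nucleus_central_exponent_2_def
proof
  fix v assume v: "v \<in> N"
  show "v \<cdot> v = e \<and> (\<forall>x\<in>L. v \<cdot> x = x \<cdot> v)"
  proof (cases "v = e")
    case False
    have "finite N"
      using assms(1) finite_subset[of N L] nucleus_in by blast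
    then have N: "N = {e, v}"
      using v False assms(2) card_seteq[of N "{e, v}"] by simp
    have "v \<cdot> v \<noteq> v"
      using False v mult_left_inj[of v v e] by simp
    then have "v \<cdot> v = e"
      using N v mult_in_nucleus by blast
    moreover have "v \<cdot> x = x \<cdot> v" if x: "x \<in> L" for x
    proof -
      obtain b where b: "b \<in> N" "v \<cdot> x = x \<cdot> b"
        using nucleus_normal[OF v x] by blast
      have "b \<noteq> e"
        using b x v False mult_right_inj[of x v e] by auto
      then show ?thesis
        using b N by blast
    qed
    ultimately show ?thesis
      by blast
  qed simp
qed

lemma assoc_if_four_cosets:
  assumes "finite L" and "card cosets = 4" and central: nucleus_central_exponent_2
    and a: "a \<in> L" and b: "b \<in> L" and c: "c \<in> L"
  shows "a \<cdot> (b \<cdot> c) = (a \<cdot> b) \<cdot> c"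
proof (cases "a \<in> N \<or> b \<in> N \<or> c \<in> N \<or> b \<in> coset a \<or> c \<in> coset b")
  case True
  then show ?thesis
    using a b c assoc_if_nuclear assoc_if_second_in_coset_first assoc_if_third_in_coset_second
    by blast
next
  case False
  interpret quotient: steiner cosets quotient_mult N
    by (rule steiner_quotient)
  have in_cosets: "coset a \<in> cosets" "coset b \<in> cosets" "coset c \<in> cosets"
    using a b c by (simp_all add: cosets_def)
  have ne: "coset a \<noteq> N" "coset b \<noteq> N" "coset c \<noteq> N" "coset a \<noteq> coset b" "coset c \<noteq> coset b"
    using False a b c coset_eq_nucleus_iff coset_eq_iff[of a b] coset_eq_iff[of b c] by auto
  txt \<open>The four cosets are N, aN, bN and (ab)N, and cN is neither N nor bN.\<close>
  let ?AB = "quotient_mult (coset a) (coset b)"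
  have "?AB \<noteq> N" "?AB \<noteq> coset a"
    using ne in_cosets by simp_all
  moreover have "?AB \<noteq> coset b"
    using ne in_cosets quotient.mult_eq_right_imp_unit by blast
  ultimately have "card {N, coset a, coset b, ?AB} = 4"
    using ne by (simp add: eq_commute)
  then have "{N, coset a, coset b, ?AB} = cosets"
    using in_cosets nucleus_in_cosets quotient.closed assms(1,2) finite_cosets
    by (intro card_subset_eq) auto
  then have "coset c \<in> {N, coset a, coset b, coset (a \<cdot> b)}"
    using in_cosets(3) a b by simp
  then have "coset a = coset c \<or> coset (a \<cdot> b) = coset c"
    using ne by auto
  then have "c \<in> coset a \<or> c \<in> coset (a \<cdot> b)"
    using coset_eq_iff[of a c] coset_eq_iff[of "a \<cdot> b" c] a b c by simp
  then show ?thesis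
    using assoc_if_third_in_coset_first[OF central a b] assoc_if_third_in_coset_product[OF a b]
    by blast
qed

lemma steiner_if_trivial_nucleus:
  assumes "N = {e}"
  shows "steiner L (\<cdot>) e"
proof
  have singleton: "coset x = {x}" if "x \<in> L" for x
    using assms that by (simp add: coset_def)
  fix x y assume x: "x \<in> L" and y: "y \<in> L"
  show "x \<cdot> x = e"
    using square_in_nucleus[OF x] assms by simp
  then show "(y \<cdot> x) \<cdot> x = y"
    using right_alternative x y by simp
  show "x \<cdot> y = y \<cdot> x"
    using coset_commute[OF x y] singleton x y by simp
qed simp_all

lemma card_gt_8_if_nonassociative:
  assumes fin: "finite L" and nonassoc: "nonassociative L (\<cdot>)"
  shows "card L > 8"
proof (rule ccontr)
  assume "\<not> card L > 8"
  define m q where "m = card N" and "q = card cosets"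
  have n: "card L = m * q"
    using card_eq_card_nucleus_mult_card_cosets[OF fin] by (simp add: m_def q_def)
  have "finite N"
    using fin finite_subset[of N L] nucleus_in by blast
  then have "m > 0"
    unfolding m_def using unit_in_nucleus card_gt_0_iff by blast
  then have "q \<le> 8" "m * q \<le> 8"
    using \<open>\<not> card L > 8\<close> n by (auto intro: order.trans[of q "m * q"])
  moreover have "q mod 6 = 2 \<or> q mod 6 = 4"
    using card_cosets_mod_6[OF fin nonassoc] by (simp add: q_def)
  ultimately have "q = 2 \<or> q = 4 \<or> q = 8"
    by presburger
  then consider "q = 2" | "q = 4" "m \<le> 2" | "q = 8" "m = 1"
    using \<open>m > 0\<close> \<open>m * q \<le> 8\<close> by fastforce
  then have "a \<cdot> (b \<cdot> c) = (a \<cdot> b) \<cdot> c" if "a \<in> L" "b \<in> L" "c \<in> L" for a b c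
  proof cases
    case 1
    then show ?thesis
      using assoc_if_two_cosets[OF fin] that by (simp add: q_def)
  next
    case 2
    then show ?thesis
      using assoc_if_four_cosets[OF fin _ nucleus_central_exponent_2_if_card_le_2[OF fin]] that
      by (simp add: q_def m_def)
  next
    case 3
    then have "N = {e}"
      using unit_in_nucleus by (metis card_1_singletonE m_def singletonD)
    then show ?thesis
      using steiner.associative_if_card_8[OF steiner_if_trivial_nucleus fin] that n 3 by simp
  qed
  then show False
    using nonassoc by (auto simp: nonassociative_def)
qed

end

lemma xor_mod_8: "xor x y mod 8 = xor (x mod 8) (y mod (8::nat))"
  using take_bit_xor[of 3 x y] by (simp add: take_bit_eq_mod)

lemma xor_less_power_2: "x < 2 ^ k \<Longrightarrow> y < 2 ^ k \<Longrightarrow> xor x y < (2::nat) ^ k"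
  by (metis take_bit_nat_eq_self_iff take_bit_nat_less_exp take_bit_xor)

lemma xor_cancel_left [simp]: "xor x (xor x y) = (y::nat)"
  by (simp flip: xor.assoc)

(* Bitwise xor with bit 3 flipped when sigma holds of the three lowest bits of x and y:
   a central extension of the elementary abelian group of order 8 by the higher bits. *)
definition twisted_xor :: "(nat \<Rightarrow> nat \<Rightarrow> bool) \<Rightarrow> nat \<Rightarrow> nat \<Rightarrow> nat" where
  "twisted_xor \<sigma> x y = xor (xor x y) (if \<sigma> (x mod 8) (y mod 8) then 8 else 0)"

lemma twisted_xor_mod_8 [simp]: "twisted_xor \<sigma> x y mod 8 = xor (x mod 8) (y mod 8)"
  by (simp add: twisted_xor_def xor_mod_8)

lemma xor_twists: "xor (if p then 8 else 0) (if q then 8 else 0) = (if p \<noteq> q then 8 else (0::nat))"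
  by simp

lemma twisted_xor_c_law:
  assumes left: "\<And>b c. b < 8 \<Longrightarrow> c < 8 \<Longrightarrow> (\<sigma> b c \<noteq> \<sigma> b (xor b c)) = \<sigma> b b"
    and right: "\<And>a b. a < 8 \<Longrightarrow> b < 8 \<Longrightarrow> (\<sigma> a b \<noteq> \<sigma> (xor a b) b) = \<sigma> b b"
  shows "twisted_xor \<sigma> x (twisted_xor \<sigma> y (twisted_xor \<sigma> y z))
    = twisted_xor \<sigma> (twisted_xor \<sigma> (twisted_xor \<sigma> x y) y) z"
proof -
  define a b c where "a = x mod 8" and "b = y mod 8" and "c = z mod 8"
  have "a < 8" "b < 8" "c < 8"
    by (simp_all add: a_def b_def c_def)
  have "twisted_xor \<sigma> x (twisted_xor \<sigma> y (twisted_xor \<sigma> y z))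
      = xor (xor x z) (xor (if \<sigma> b c \<noteq> \<sigma> b (xor b c) then 8 else 0) (if \<sigma> a c then 8 else 0))"
    by (simp add: twisted_xor_def a_def b_def c_def xor.assoc xor.left_commute xor_mod_8
        flip: xor_twists)
  also have "\<dots> = xor (xor x z)
      (xor (if \<sigma> a b \<noteq> \<sigma> (xor a b) b then 8 else 0) (if \<sigma> a c then 8 else 0))"
    using left[OF \<open>b < 8\<close> \<open>c < 8\<close>] right[OF \<open>a < 8\<close> \<open>b < 8\<close>] by simp
  also have "\<dots> = twisted_xor \<sigma> (twisted_xor \<sigma> (twisted_xor \<sigma> x y) y) z"
    by (simp add: twisted_xor_def a_def b_def c_def xor.assoc xor.left_commute xor_mod_8
        flip: xor_twists)
  finally show ?thesis .
qed

lemma xor_twist_less_power_2: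
  assumes "4 \<le> k" and "x < 2 ^ k"
  shows "xor x (if p then 8 else 0) < (2::nat) ^ k"
proof -
  have "(8::nat) < 2 ^ k"
    using power_strict_increasing[of 3 k "2::nat"] assms(1) by simp
  then show ?thesis
    using assms(2) by (simp add: xor_less_power_2)
qed

lemma twisted_xor_left_division:
  "\<exists>!x. x < 2 ^ k \<and> twisted_xor \<sigma> a x = b" if "4 \<le> k" "a < 2 ^ k" "b < 2 ^ k"
proof
  define x where "x = xor (xor a b) (if \<sigma> (a mod 8) (xor a b mod 8) then 8 else 0)"
  have "x mod 8 = xor a b mod 8"
    by (simp add: x_def xor_mod_8)
  then show "x < 2 ^ k \<and> twisted_xor \<sigma> a x = b"
    using that xor_twist_less_power_2
    by (auto simp: x_def twisted_xor_def xor_less_power_2 xor.assoc xor.commute xor.left_commute)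
  fix x' assume x': "x' < 2 ^ k \<and> twisted_xor \<sigma> a x' = b"
  then have "xor (a mod 8) (x' mod 8) = b mod 8"
    using twisted_xor_mod_8[of \<sigma> a x'] by simp
  then have "x' mod 8 = xor a b mod 8"
    by (metis xor_cancel_left xor_mod_8)
  with x' show "x' = x"
    by (auto simp: x_def twisted_xor_def xor.assoc xor.commute xor.left_commute)
qed

lemma twisted_xor_right_division:
  "\<exists>!y. y < 2 ^ k \<and> twisted_xor \<sigma> y a = b" if "4 \<le> k" "a < 2 ^ k" "b < 2 ^ k"
proof
  define y where "y = xor (xor a b) (if \<sigma> (xor a b mod 8) (a mod 8) then 8 else 0)"
  have "y mod 8 = xor a b mod 8"
    by (simp add: y_def xor_mod_8)
  then show "y < 2 ^ k \<and> twisted_xor \<sigma> y a = b"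
    using that xor_twist_less_power_2
    by (auto simp: y_def twisted_xor_def xor_less_power_2 xor.assoc xor.commute xor.left_commute)
  fix y' assume y': "y' < 2 ^ k \<and> twisted_xor \<sigma> y' a = b"
  then have "xor (y' mod 8) (a mod 8) = b mod 8"
    using twisted_xor_mod_8[of \<sigma> y' a] by simp
  then have "y' mod 8 = xor a b mod 8"
    by (metis xor_cancel_left xor_mod_8 xor.commute)
  with y' show "y' = y"
    by (auto simp: y_def twisted_xor_def xor.assoc xor.commute xor.left_commute)
qed

lemma c_loop_twisted_xor:
  assumes "4 \<le> k"
    and unit: "\<And>a. a < 8 \<Longrightarrow> \<not> \<sigma> 0 a \<and> \<not> \<sigma> a 0"
    and left: "\<And>b c. b < 8 \<Longrightarrow> c < 8 \<Longrightarrow> (\<sigma> b c \<noteq> \<sigma> b (xor b c)) = \<sigma> b b"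
    and right: "\<And>a b. a < 8 \<Longrightarrow> b < 8 \<Longrightarrow> (\<sigma> a b \<noteq> \<sigma> (xor a b) b) = \<sigma> b b"
  shows "c_loop {..<2 ^ k} (twisted_xor \<sigma>)"
  unfolding c_loop_def loop_def
proof (intro conjI ballI)
  show "twisted_xor \<sigma> x y \<in> {..<2 ^ k}" if "x \<in> {..<2 ^ k}" "y \<in> {..<2 ^ k}" for x y
    using that assms(1) xor_twist_less_power_2 by (simp add: twisted_xor_def xor_less_power_2)
  show "\<exists>e\<in>{..<2 ^ k}. \<forall>x\<in>{..<2 ^ k}. twisted_xor \<sigma> e x = x \<and> twisted_xor \<sigma> x e = x"
    using unit by (intro bexI[of _ 0]) (auto simp: twisted_xor_def)
  show "\<exists>!x. x \<in> {..<2 ^ k} \<and> twisted_xor \<sigma> a x = b" if "a \<in> {..<2 ^ k}" "b \<in> {..<2 ^ k}" for a b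
    using twisted_xor_left_division[OF assms(1)] that by simp
  show "\<exists>!y. y \<in> {..<2 ^ k} \<and> twisted_xor \<sigma> y a = b" if "a \<in> {..<2 ^ k}" "b \<in> {..<2 ^ k}" for a b
    using twisted_xor_right_division[OF assms(1)] that by simp
  show "twisted_xor \<sigma> x (twisted_xor \<sigma> y (twisted_xor \<sigma> y z))
      = twisted_xor \<sigma> (twisted_xor \<sigma> (twisted_xor \<sigma> x y) y) z" for x y z
    using left right by (rule twisted_xor_c_law)
qed

(* Row a lists the b with twist a b.  As twist 1 1 holds, 1 * 1 = 8 in the loop below. *)
definition twist :: "nat \<Rightarrow> nat \<Rightarrow> bool" where
  "twist a b \<longleftrightarrow> b \<in> [{}, {1, 3, 5, 6}, {1, 2, 6, 7}, {2, 3, 5, 7}, {1, 2, 3, 4}, {2, 4, 5, 6},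
    {3, 4, 6, 7}, {1, 4, 5, 7}] ! a"

lemma less_8_iff: "(a::nat) < 8 \<longleftrightarrow> a \<in> {0, 1, 2, 3, 4, 5, 6, 7}"
  by auto

lemma twist_unit: "a < 8 \<Longrightarrow> \<not> twist 0 a \<and> \<not> twist a 0"
  unfolding less_8_iff by (elim insertE emptyE; simp add: twist_def)

lemma twist_left: "b < 8 \<Longrightarrow> c < 8 \<Longrightarrow> (twist b c \<noteq> twist b (xor b c)) = twist b b"
  unfolding less_8_iff by (elim insertE emptyE; simp add: twist_def)

lemma twist_right: "a < 8 \<Longrightarrow> b < 8 \<Longrightarrow> (twist a b \<noteq> twist (xor a b) b) = twist b b"
  unfolding less_8_iff by (elim insertE emptyE; simp add: twist_def)

lemma exists_nonassociative_c_loop_not_steiner: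
  assumes "3 < k"
  shows "\<exists>(M::nat set) g. finite M \<and> card M = 2 ^ k \<and> c_loop M g \<and> nonassociative M g
    \<and> \<not> steiner_loop M g"
proof (intro exI conjI)
  let ?M = "{..<2 ^ k} :: nat set" and ?g = "twisted_xor twist"
  have "(16::nat) \<le> 2 ^ k"
    using power_increasing[of 4 k "2::nat"] assms by simp
  then have small: "1 \<in> ?M" "2 \<in> ?M" "4 \<in> ?M"
    by auto
  show "finite ?M" "card ?M = 2 ^ k"
    by simp_all
  show "c_loop ?M ?g"
    using assms twist_unit twist_left twist_right by (intro c_loop_twisted_xor) auto
  show "nonassociative ?M ?g"
    unfolding nonassociative_def using small
    by (intro bexI[of _ 1] bexI[of _ 2] bexI[of _ 4]) (simp_all add: twisted_xor_def twist_def)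
  show "\<not> steiner_loop ?M ?g"
  proof
    assume "steiner_loop ?M ?g"
    then obtain e where unit: "\<forall>x\<in>?M. ?g e x = x" and square: "\<forall>x\<in>?M. ?g x x = e"
      unfolding steiner_loop_def by blast
    have "?g e 0 = e"
      using twist_unit[of "e mod 8"] by (simp add: twisted_xor_def)
    then have "e = 0"
      using unit by simp
    then have "?g 1 1 = 0"
      using square small(1) by blast
    then show False
      by (simp add: twisted_xor_def twist_def)
  qed
qed

theorem proposition3p1:
  fixes L :: "'a set" and f :: "'a \<Rightarrow> 'a \<Rightarrow> 'a" and n m :: nat
  assumes "finite L" and "c_loop L f" and "nonassociative L f"
    and "card L = n" and "card (nucleus L f) = m"
  shows "(m dvd n \<and> (n div m) mod 6 \<in> {2, 4})
       \<and> even n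
       \<and> (\<forall>p k. prime p \<and> k > 0 \<and> n = p ^ k \<longrightarrow> p = 2 \<and> k > 3)
       \<and> (\<forall>k::nat. k > 3 \<longrightarrow> (\<exists>(M::nat set) g. finite M \<and> card M = 2 ^ k \<and>
              c_loop M g \<and> nonassociative M g \<and> \<not> steiner_loop M g))"
proof -
  obtain e where "e \<in> L" and "\<forall>x\<in>L. f e x = x \<and> f x e = x"
    using assms(2) unfolding c_loop_def loop_def by (elim conjE) blast
  then interpret cloop L f e
    using assms(2) by unfold_locales simp_all
  define q where "q = card cosets"
  have n: "n = m * q"
    using card_eq_card_nucleus_mult_card_cosets assms(1,4,5) by (simp add: q_def)
  have q: "q mod 6 \<in> {2, 4}"
    using card_cosets_mod_6 assms(1,3) by (simp add: q_def)
  have "n > 8"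
    using card_gt_8_if_nonassociative assms(1,3,4) by simp
  then have "m > 0"
    using n by (cases m) auto
  have "even q"
    using q by auto presburger+
  then have "even n"
    using n by simp
  have "p = 2 \<and> k > 3" if "prime p" "k > 0" "n = p ^ k" for p k
  proof
    show "p = 2"
      using \<open>even n\<close> that prime_dvd_power[of 2 p k] primes_dvd_imp_eq[of 2 p] by simp
    with \<open>n > 8\<close> \<open>n = p ^ k\<close> show "k > 3"
      using power_increasing[of k 3 "2::nat"] by (cases "k \<le> 3") auto
  qed
  then show ?thesis
    using n q \<open>m > 0\<close> \<open>even n\<close> exists_nonassociative_c_loop_not_steiner by auto
qed

end
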